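(* Let jobs $1,\dots,m$ form a feasible set, and let $r\le d$ be times with $r_j\ge r$ and $d_j\le d$ for all $j$. Let $\alpha\ge 1$ and let $\alpha$-DLY be any scheduling policy that, at every time $t$, only runs work of a job $j$ whose current stretch $(t-r_j)/(d_j-r_j)$ is at least $\alpha$. Then the total amount of time during which $\alpha$-DLY runs these jobs (until all are completed) is at most $(d-r)/\alpha$.
   Context: Jobs $j$ have release time $r_j$, due date $d_j>r_j$, work $w_j>0$, and linear speed function $f_j(t)=m_j(t-r_j)$ with $m_j>0$. A single processor runs at most one job at a time, preemption is allowed, and running job $j$ during a set of times $S$ completes $\int_S f_j(t)\,dt$ units of its work. A set of jobs is feasible if some schedule runs each job only within $[r_j,d_j]$ and completes it by $d_j$. *)

theory Defs
  imports "HOL-Analysis.Analysis"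
begin

text \<open>Jobs are indexed by natural numbers; job j has release time rr j, due date dd j,
  work w j and speed slope mm j.
  A schedule assigns to each job a Lebesgue-measurable set of times; the sets of
  distinct jobs are pairwise disjoint (single processor, preemption allowed).\<close>

definition speed :: "(nat \<Rightarrow> real) \<Rightarrow> (nat \<Rightarrow> real) \<Rightarrow> nat \<Rightarrow> real \<Rightarrow> real" where
  "speed mm rr j t = mm j * (t - rr j)"

definition work_done :: "(nat \<Rightarrow> real) \<Rightarrow> (nat \<Rightarrow> real) \<Rightarrow> nat \<Rightarrow> real set \<Rightarrow> ennreal" where
  "work_done mm rr j S = (\<integral>\<^sup>+ t\<in>S. ennreal (speed mm rr j t) \<partial>lborel)"

definition feasible ::
  "nat set \<Rightarrow> (nat \<Rightarrow> real) \<Rightarrow> (nat \<Rightarrow> real) \<Rightarrow> (nat \<Rightarrow> real) \<Rightarrow> (nat \<Rightarrow> real) \<Rightarrow> bool" where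
  "feasible J rr dd w mm \<longleftrightarrow>
     (\<exists>S :: nat \<Rightarrow> real set.
        disjoint_family_on S J \<and>
        (\<forall>j\<in>J. S j \<in> sets lborel \<and> S j \<subseteq> {rr j .. dd j} \<and>
                ennreal (w j) \<le> work_done mm rr j (S j)))"

definition stretch :: "(nat \<Rightarrow> real) \<Rightarrow> (nat \<Rightarrow> real) \<Rightarrow> nat \<Rightarrow> real \<Rightarrow> real" where
  "stretch rr dd j t = (t - rr j) / (dd j - rr j)"

definition dly_schedule ::
  "real \<Rightarrow> nat set \<Rightarrow> (nat \<Rightarrow> real) \<Rightarrow> (nat \<Rightarrow> real) \<Rightarrow> (nat \<Rightarrow> real) \<Rightarrow> (nat \<Rightarrow> real)
     \<Rightarrow> (nat \<Rightarrow> real set) \<Rightarrow> bool" where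
  "dly_schedule \<alpha> J rr dd w mm T \<longleftrightarrow>
     disjoint_family_on T J \<and>
     (\<forall>j\<in>J. T j \<in> sets lborel \<and>
             (\<forall>t\<in>T j. stretch rr dd j t \<ge> \<alpha>) \<and>
             work_done mm rr j (T j) = ennreal (w j))"

end

theory Submission
  imports Defs
begin

text \<open>Let \<open>c\<^sub>j = m\<^sub>j (d\<^sub>j - r\<^sub>j)\<close> be the speed of job \<open>j\<close> at its due date. A feasible schedule runs
  \<open>j\<close> at speed at most \<open>c\<^sub>j\<close>, so it needs time at least \<open>w\<^sub>j / c\<^sub>j\<close>; the \<open>\<alpha>\<close>-DLY policy only runs
  \<open>j\<close> once its stretch is at least \<open>\<alpha>\<close>, i.e. at speed at least \<open>\<alpha> c\<^sub>j\<close>, so it spends time at most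
  \<open>w\<^sub>j / (\<alpha> c\<^sub>j)\<close>. Thus \<open>\<alpha>\<close>-DLY spends on each job at most \<open>1/\<alpha>\<close> of the time the feasible
  schedule spends on it, and the latter times are disjoint subsets of \<open>[r, d]\<close>.\<close>

lemma emeasure_scaled_le_set_nn_integral:
  fixes f :: "'a \<Rightarrow> ennreal"
  assumes "A \<in> sets M" and "\<And>x. x \<in> A \<Longrightarrow> c \<le> f x"
  shows "c * emeasure M A \<le> (\<integral>\<^sup>+x\<in>A. f x \<partial>M)"
proof -
  have "c * emeasure M A = (\<integral>\<^sup>+x. c * indicator A x \<partial>M)"
    using assms(1) by (simp add: nn_integral_cmult_indicator)
  also have "\<dots> \<le> (\<integral>\<^sup>+x\<in>A. f x \<partial>M)"
    using assms(2) by (intro nn_integral_mono) (auto split: split_indicator)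
  finally show ?thesis .
qed

lemma set_nn_integral_le_emeasure_scaled:
  fixes f :: "'a \<Rightarrow> ennreal"
  assumes "A \<in> sets M" and "\<And>x. x \<in> A \<Longrightarrow> f x \<le> c"
  shows "(\<integral>\<^sup>+x\<in>A. f x \<partial>M) \<le> c * emeasure M A"
proof -
  have "(\<integral>\<^sup>+x\<in>A. f x \<partial>M) \<le> (\<integral>\<^sup>+x. c * indicator A x \<partial>M)"
    using assms(2) by (intro nn_integral_mono) (auto split: split_indicator)
  also have "\<dots> = c * emeasure M A"
    using assms(1) by (simp add: nn_integral_cmult_indicator)
  finally show ?thesis .
qed

lemma dly_time_le_feasible_time:
  assumes job: "rr j < dd j" "mm j > 0" and "\<alpha> > 0"
    and S: "S \<in> sets lborel" "S \<subseteq> {rr j..dd j}" "ennreal (w j) \<le> work_done mm rr j S"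
    and T: "T \<in> sets lborel" "\<And>t. t \<in> T \<Longrightarrow> \<alpha> \<le> stretch rr dd j t"
      "work_done mm rr j T = ennreal (w j)"
  shows "ennreal \<alpha> * emeasure lborel T \<le> emeasure lborel S"
proof -
  define c where "c = mm j * (dd j - rr j)"
  have "c > 0"
    using job by (simp add: c_def)
  have fast: "ennreal (c * \<alpha>) \<le> ennreal (speed mm rr j t)" if "t \<in> T" for t
  proof (rule ennreal_leI)
    have "\<alpha> * (dd j - rr j) \<le> t - rr j"
      using T(2)[OF that] job(1) by (simp add: stretch_def pos_le_divide_eq)
    then show "c * \<alpha> \<le> speed mm rr j t"
      using job(2) unfolding c_def speed_def
      by (metis mult.assoc mult.commute mult_left_mono less_imp_le)
  qed
  have slow: "ennreal (speed mm rr j t) \<le> ennreal c" if "t \<in> S" for t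
    using that S(2) job(2) unfolding c_def speed_def
    by (intro ennreal_leI mult_left_mono) auto
  have "ennreal c * (ennreal \<alpha> * emeasure lborel T) = ennreal (c * \<alpha>) * emeasure lborel T"
    using \<open>c > 0\<close> \<open>\<alpha> > 0\<close> by (simp add: ennreal_mult mult.assoc)
  also have "\<dots> \<le> work_done mm rr j T"
    unfolding work_done_def using T(1) fast by (rule emeasure_scaled_le_set_nn_integral)
  also have "\<dots> \<le> work_done mm rr j S"
    using S(3) T(3) by simp
  also have "\<dots> \<le> ennreal c * emeasure lborel S"
    unfolding work_done_def using S(1) slow by (rule set_nn_integral_le_emeasure_scaled)
  finally show ?thesis
    using \<open>c > 0\<close> by (simp add: ennreal_mult_le_mult_iff)
qed

theorem mainTheorem6:
  fixes m :: nat and rr dd w mm :: "nat \<Rightarrow> real" and r d \<alpha> :: real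
    and T :: "nat \<Rightarrow> real set"
  assumes jobs: "\<And>j. j \<in> {1..m} \<Longrightarrow> rr j < dd j \<and> w j > 0 \<and> mm j > 0"
    and feas: "feasible {1..m} rr dd w mm"
    and rd: "r \<le> d"
    and rel: "\<And>j. j \<in> {1..m} \<Longrightarrow> r \<le> rr j"
    and due: "\<And>j. j \<in> {1..m} \<Longrightarrow> dd j \<le> d"
    and alpha: "\<alpha> \<ge> 1"
    and dly: "dly_schedule \<alpha> {1..m} rr dd w mm T"
  shows "emeasure lborel (\<Union>j\<in>{1..m}. T j) \<le> ennreal ((d - r) / \<alpha>)"
proof -
  obtain S where S_disj: "disjoint_family_on S {1..m}"
    and S: "\<And>j. j \<in> {1..m} \<Longrightarrow> S j \<in> sets lborel \<and> S j \<subseteq> {rr j..dd j} \<and>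
              ennreal (w j) \<le> work_done mm rr j (S j)"
    using feas unfolding feasible_def by blast
  have T: "\<And>j. j \<in> {1..m} \<Longrightarrow> T j \<in> sets lborel \<and> (\<forall>t\<in>T j. stretch rr dd j t \<ge> \<alpha>) \<and>
             work_done mm rr j (T j) = ennreal (w j)"
    using dly unfolding dly_schedule_def by blast
  have each: "ennreal \<alpha> * emeasure lborel (T j) \<le> emeasure lborel (S j)" if "j \<in> {1..m}" for j
    using jobs[OF that] S[OF that] T[OF that] alpha
    by (intro dly_time_le_feasible_time[where mm = mm and w = w]) auto
  have "ennreal \<alpha> * emeasure lborel (\<Union>j\<in>{1..m}. T j)
      \<le> ennreal \<alpha> * (\<Sum>j\<in>{1..m}. emeasure lborel (T j))"
    using T by (intro mult_left_mono emeasure_subadditive_finite) auto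
  also have "\<dots> \<le> (\<Sum>j\<in>{1..m}. emeasure lborel (S j))"
    unfolding sum_distrib_left using each by (rule sum_mono)
  also have "\<dots> = emeasure lborel (\<Union>j\<in>{1..m}. S j)"
    using S S_disj by (intro sum_emeasure) auto
  also have "\<dots> \<le> emeasure lborel {r..d}"
    using S rel due by (intro emeasure_mono) fastforce+
  also have "\<dots> = ennreal \<alpha> * ennreal ((d - r) / \<alpha>)"
    using rd alpha by (simp flip: ennreal_mult)
  finally show ?thesis
    using alpha by (simp add: ennreal_mult_le_mult_iff)
qed

end
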